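(* Let $E$ be an Archimedean vector lattice with a weak unit $u$, let $X$ be a compact Hausdorff space and let $T:E\to S(X)$ be an injective lattice homomorphism such that $T(u)=\mathbf{1}_X$ and the closure, with respect to the supremum norm, of $T(E_u)$ equals $C(X)$, where $E_u$ is the ideal of $E$ generated by $u$ (such $X$ and $T$ exist by Wickstead's representation theorem, and $T$ is this representation). Then $T$ is order continuous and $uo$-continuous (i.e. $x_\alpha\xrightarrow{uo}x$ in $E$ implies $T(x_\alpha)\xrightarrow{uo}T(x)$ in $S(X)$). Moreover $T^{-1}:T(E)\to E$ is $uo$-continuous: if $T(x_\alpha)\xrightarrow{uo}T(x)$ in $S(X)$ then $x_\alpha\xrightarrow{uo}x$ in $E$.
   Context: For a topological space $X$, $S(X)$ is the Archimedean vector lattice of equivalence classes of continuous real-valued functions defined on open dense subsets of $X$ (two functions identified if they agree on the intersection of their domains), with pointwise operations; $C(X)$ is viewed inside $S(X)$ and $\mathbf{1}_X$ is the constant function $1$. A net $(x_\alpha)$ in a vector lattice $E$ converges in order to $x$ if there is a net $u_\gamma\downarrow 0$ such that for each $\gamma$ there is $\alpha_0$ with $|x_\alpha-x|\le u_\gamma$ for $\alpha\ge\alpha_0$; it is $uo$-convergent to $x$ if $|x_\alpha-x|\wedge w$ converges in order to $0$ for every $w\in E_+$. An operator is order continuous if it maps order null nets to order null nets. *)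

theory Defs
  imports "HOL-Analysis.Analysis"
begin

definition vabs :: "'e::{ordered_real_vector,lattice} \<Rightarrow> 'e" where
  "vabs x = sup x (- x)"

definition archimedean_vl :: "'e::{ordered_real_vector,lattice} itself \<Rightarrow> bool" where
  "archimedean_vl _ \<longleftrightarrow> (\<forall>x y::'e. (\<forall>n::nat. real n *\<^sub>R x \<le> y) \<longrightarrow> x \<le> 0)"

definition weak_unit :: "'e::{ordered_real_vector,lattice} \<Rightarrow> bool" where
  "weak_unit u \<longleftrightarrow> 0 \<le> u \<and> (\<forall>x. inf (vabs x) u = 0 \<longrightarrow> x = 0)"

definition principal_ideal :: "'e::{ordered_real_vector,lattice} \<Rightarrow> 'e set" where
  "principal_ideal u = {x. \<exists>c::real. vabs x \<le> c *\<^sub>R u}"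

text \<open>A net is a map from a directed set (I, r) into the space.\<close>
definition directed_set :: "'i set \<Rightarrow> ('i \<Rightarrow> 'i \<Rightarrow> bool) \<Rightarrow> bool" where
  "directed_set I r \<longleftrightarrow> I \<noteq> {} \<and> (\<forall>a\<in>I. r a a)
     \<and> (\<forall>a\<in>I. \<forall>b\<in>I. \<forall>c\<in>I. r a b \<longrightarrow> r b c \<longrightarrow> r a c)
     \<and> (\<forall>a\<in>I. \<forall>b\<in>I. \<exists>c\<in>I. r a c \<and> r b c)"

text \<open>The dominating net is represented by its (downward directed) set of values D with infimum 0;
  this is equivalent to the net formulation (index D by itself under reverse order).\<close>
definition ord_conv_E :: "'i set \<Rightarrow> ('i \<Rightarrow> 'i \<Rightarrow> bool) \<Rightarrow> ('i \<Rightarrow> 'e::{ordered_real_vector,lattice}) \<Rightarrow> 'e \<Rightarrow> bool" where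
  "ord_conv_E I r x l \<longleftrightarrow> (\<exists>D::'e set. D \<noteq> {}
      \<and> (\<forall>d1\<in>D. \<forall>d2\<in>D. \<exists>d\<in>D. d \<le> d1 \<and> d \<le> d2)
      \<and> (\<forall>d\<in>D. 0 \<le> d) \<and> (\<forall>w. (\<forall>d\<in>D. w \<le> d) \<longrightarrow> w \<le> 0)
      \<and> (\<forall>d\<in>D. \<exists>a0\<in>I. \<forall>a\<in>I. r a0 a \<longrightarrow> vabs (x a - l) \<le> d))"

definition uo_conv_E :: "'i set \<Rightarrow> ('i \<Rightarrow> 'i \<Rightarrow> bool) \<Rightarrow> ('i \<Rightarrow> 'e::{ordered_real_vector,lattice}) \<Rightarrow> 'e \<Rightarrow> bool" where
  "uo_conv_E I r x l \<longleftrightarrow> (\<forall>w. 0 \<le> w \<longrightarrow> ord_conv_E I r (\<lambda>a. inf (vabs (x a - l)) w) 0)"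

text \<open>Elements of S(X) are represented by functions X \<Rightarrow> real that are continuous on some open dense
  set; two representatives denote the same element iff they agree on some open dense set
  (equivalently, on the intersection of their domains of continuity).\<close>

definition dense_open :: "'x::topological_space set \<Rightarrow> bool" where
  "dense_open U \<longleftrightarrow> open U \<and> closure U = UNIV"

definition SX :: "('x::topological_space \<Rightarrow> real) set" where
  "SX = {f. \<exists>U. dense_open U \<and> continuous_on U f}"

definition sle :: "('x::topological_space \<Rightarrow> real) \<Rightarrow> ('x \<Rightarrow> real) \<Rightarrow> bool" where
  "sle f g \<longleftrightarrow> (\<exists>U. dense_open U \<and> (\<forall>t\<in>U. f t \<le> g t))"

definition seq :: "('x::topological_space \<Rightarrow> real) \<Rightarrow> ('x \<Rightarrow> real) \<Rightarrow> bool" where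
  "seq f g \<longleftrightarrow> sle f g \<and> sle g f"

definition ord_conv_S :: "'i set \<Rightarrow> ('i \<Rightarrow> 'i \<Rightarrow> bool) \<Rightarrow> ('i \<Rightarrow> 'x::topological_space \<Rightarrow> real) \<Rightarrow> ('x \<Rightarrow> real) \<Rightarrow> bool" where
  "ord_conv_S I r x l \<longleftrightarrow> (\<exists>D. D \<subseteq> SX \<and> D \<noteq> {}
      \<and> (\<forall>d1\<in>D. \<forall>d2\<in>D. \<exists>d\<in>D. sle d d1 \<and> sle d d2)
      \<and> (\<forall>d\<in>D. sle (\<lambda>t. 0) d) \<and> (\<forall>w\<in>SX. (\<forall>d\<in>D. sle w d) \<longrightarrow> sle w (\<lambda>t. 0))
      \<and> (\<forall>d\<in>D. \<exists>a0\<in>I. \<forall>a\<in>I. r a0 a \<longrightarrow> sle (\<lambda>t. \<bar>x a t - l t\<bar>) d))"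

definition uo_conv_S :: "'i set \<Rightarrow> ('i \<Rightarrow> 'i \<Rightarrow> bool) \<Rightarrow> ('i \<Rightarrow> 'x::topological_space \<Rightarrow> real) \<Rightarrow> ('x \<Rightarrow> real) \<Rightarrow> bool" where
  "uo_conv_S I r x l \<longleftrightarrow> (\<forall>w\<in>SX. sle (\<lambda>t. 0) w \<longrightarrow>
      ord_conv_S I r (\<lambda>a t. min \<bar>x a t - l t\<bar> (w t)) (\<lambda>t. 0))"

definition sup_closure :: "('x::topological_space \<Rightarrow> real) set \<Rightarrow> ('x \<Rightarrow> real) set" where
  "sup_closure A = {f \<in> SX. \<forall>\<epsilon>>0. \<exists>g\<in>A. \<exists>U. dense_open U \<and> (\<forall>t\<in>U. \<bar>f t - g t\<bar> \<le> \<epsilon>)}"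

definition inj_lattice_hom_S :: "('e::{ordered_real_vector,lattice} \<Rightarrow> 'x::topological_space \<Rightarrow> real) \<Rightarrow> bool" where
  "inj_lattice_hom_S T \<longleftrightarrow> (\<forall>x. T x \<in> SX)
     \<and> (\<forall>x y. seq (T (x + y)) (\<lambda>t. T x t + T y t))
     \<and> (\<forall>c x. seq (T (c *\<^sub>R x)) (\<lambda>t. c * T x t))
     \<and> (\<forall>x y. seq (T (sup x y)) (\<lambda>t. max (T x t) (T y t)))
     \<and> (\<forall>x y. seq (T x) (T y) \<longrightarrow> x = y)"

end

theory Submission
  imports Defs
begin

text \<open>The key fact is that \<open>T(E)\<close> is order dense in \<open>S(X)\<close>: below every positive non-zero element lies
  some \<open>T e\<close> with \<open>e > 0\<close>, the positive part of an approximation from \<open>T(E\<^sub>u)\<close> of a small Urysohn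
  bump.  Hence \<open>T\<close> maps sets with infimum \<open>0\<close> to sets with infimum \<open>0\<close>, which is order continuity.
  For \<open>uo\<close>-continuity, an eventual lower bound \<open>v\<close> of the dominators of the nets truncated by \<open>w\<close>
  lies below every excess \<open>(w - n)\<^sup>+\<close>, because \<open>T\<close> preserves the infima coming from the truncations
  by \<open>n u\<close>; as \<open>w\<close> is locally bounded, \<open>v \<le> 0\<close>.  Conversely, if \<open>T v\<close> were not below a
  dominator \<open>\<delta>\<close> of the image nets, order density would give \<open>e\<^sub>2 > 0\<close> under \<open>T v - \<delta>\<close>, and
  comparing \<open>v\<close> with the dominators \<open>v - e\<^sub>2 + (e - c e\<^sub>2)\<^sup>+\<close> gives \<open>c e\<^sub>2 \<le> e\<close> for all \<open>c\<close>,
  contradicting the Archimedean property.\<close>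

section \<open>Dense open sets and S(X)\<close>

lemma dense_open_UNIV: "dense_open UNIV"
  by (simp add: dense_open_def)

lemma dense_open_Int:
  assumes "dense_open U" "dense_open V" shows "dense_open (U \<inter> V)"
proof -
  have "U \<subseteq> closure (U \<inter> V)"
    using open_Int_closure_subset[of U V] assms by (auto simp: dense_open_def)
  then have "closure U \<subseteq> closure (U \<inter> V)"
    by (metis closure_closure closure_mono)
  then show ?thesis using assms by (auto simp: dense_open_def)
qed

definition dense_open_filter :: "'x::topological_space filter" where
  "dense_open_filter = Abs_filter (\<lambda>P. \<exists>U. dense_open U \<and> (\<forall>t\<in>U. P t))"

lemma eventually_dense_open_filter:
  "eventually P dense_open_filter \<longleftrightarrow> (\<exists>U. dense_open U \<and> (\<forall>t\<in>U. P t))"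
  unfolding dense_open_filter_def
proof (rule eventually_Abs_filter, rule is_filter.intro)
  show "\<exists>U. dense_open U \<and> (\<forall>t\<in>U. True)" using dense_open_UNIV by blast
next
  fix P Q :: "'a \<Rightarrow> bool"
  assume "\<exists>U. dense_open U \<and> (\<forall>t\<in>U. P t)" "\<exists>U. dense_open U \<and> (\<forall>t\<in>U. Q t)"
  then obtain U V where "dense_open U" "\<forall>t\<in>U. P t" "dense_open V" "\<forall>t\<in>V. Q t" by blast
  then show "\<exists>U. dense_open U \<and> (\<forall>t\<in>U. P t \<and> Q t)"
    by (intro exI[of _ "U \<inter> V"]) (auto intro: dense_open_Int)
next
  fix P Q :: "'a \<Rightarrow> bool"
  assume "\<forall>x. P x \<longrightarrow> Q x" "\<exists>U. dense_open U \<and> (\<forall>t\<in>U. P t)"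
  then show "\<exists>U. dense_open U \<and> (\<forall>t\<in>U. Q t)" by blast
qed

lemma sle_iff_eventually: "sle f g \<longleftrightarrow> (\<forall>\<^sub>F t in dense_open_filter. f t \<le> g t)"
  by (simp add: sle_def eventually_dense_open_filter)

lemma seq_iff_eventually: "seq f g \<longleftrightarrow> (\<forall>\<^sub>F t in dense_open_filter. f t = g t)"
proof
  assume "seq f g"
  then have "\<forall>\<^sub>F t in dense_open_filter. f t \<le> g t" "\<forall>\<^sub>F t in dense_open_filter. g t \<le> f t"
    by (auto simp: seq_def sle_iff_eventually)
  then show "\<forall>\<^sub>F t in dense_open_filter. f t = g t" by eventually_elim auto
next
  assume "\<forall>\<^sub>F t in dense_open_filter. f t = g t"
  then have "\<forall>\<^sub>F t in dense_open_filter. f t \<le> g t" "\<forall>\<^sub>F t in dense_open_filter. g t \<le> f t"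
    by (auto elim: eventually_mono)
  then show "seq f g" by (auto simp: seq_def sle_iff_eventually)
qed

lemma eventually_dense_open_filter_in_open:
  assumes "open V" "V \<noteq> {}" "\<forall>\<^sub>F t in dense_open_filter. P t"
  shows "\<exists>t\<in>V. P t"
proof -
  obtain U where U: "dense_open U" "\<forall>t\<in>U. P t"
    using assms(3) by (auto simp: eventually_dense_open_filter)
  have "V \<inter> U \<noteq> {}"
    using open_Int_closure_eq_empty[of V U] assms U by (auto simp: dense_open_def)
  then show ?thesis using U by blast
qed

lemma SX_common_domain:
  assumes "f \<in> SX" "g \<in> SX"
  obtains U where "dense_open U" "continuous_on U f" "continuous_on U g"
proof -
  obtain U V where "dense_open U" "continuous_on U f" "dense_open V" "continuous_on V g"
    using assms by (auto simp: SX_def)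
  then show ?thesis
    by (intro that[of "U \<inter> V"]) (auto intro: dense_open_Int continuous_on_subset)
qed

lemma SX_add: "f \<in> SX \<Longrightarrow> g \<in> SX \<Longrightarrow> (\<lambda>t. f t + g t) \<in> SX"
  by (erule SX_common_domain, assumption) (auto simp: SX_def intro!: continuous_intros)

lemma SX_diff: "f \<in> SX \<Longrightarrow> g \<in> SX \<Longrightarrow> (\<lambda>t. f t - g t) \<in> SX"
  by (erule SX_common_domain, assumption) (auto simp: SX_def intro!: continuous_intros)

lemma SX_max: "f \<in> SX \<Longrightarrow> g \<in> SX \<Longrightarrow> (\<lambda>t. max (f t) (g t)) \<in> SX"
  by (erule SX_common_domain, assumption) (auto simp: SX_def intro!: continuous_intros)

lemma SX_min: "f \<in> SX \<Longrightarrow> g \<in> SX \<Longrightarrow> (\<lambda>t. min (f t) (g t)) \<in> SX"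
  by (erule SX_common_domain, assumption) (auto simp: SX_def intro!: continuous_intros)

lemma SX_const: "(\<lambda>t. c) \<in> SX"
  using dense_open_UNIV by (auto simp: SX_def)

lemma SX_positive_on_open:
  assumes "f \<in> SX" "\<not> sle f (\<lambda>t. 0)"
  obtains V \<epsilon> where "open V" "V \<noteq> {}" "0 < \<epsilon>" "\<forall>t\<in>V. \<epsilon> \<le> f t"
proof -
  obtain U where U: "dense_open U" "continuous_on U f" using assms by (auto simp: SX_def)
  obtain t0 where t0: "t0 \<in> U" "0 < f t0"
    using assms(2) U(1) unfolding sle_def by force
  define V where "V = U \<inter> f -` {f t0 / 2 <..}"
  have "open V" unfolding V_def
    using U by (intro continuous_open_preimage) (auto simp: dense_open_def)
  moreover have "t0 \<in> V" using t0 by (auto simp: V_def)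
  ultimately show ?thesis using t0 by (intro that[of V "f t0 / 2"]) (auto simp: V_def)
qed

lemma SX_sle_zero_if_sle_excesses:
  assumes "f \<in> SX" "g \<in> SX" "\<forall>n::nat. sle f (\<lambda>t. max (g t - real n) 0)"
  shows "sle f (\<lambda>t. 0)"
proof (rule ccontr)
  assume "\<not> sle f (\<lambda>t. 0)"
  obtain U where U: "dense_open U" "continuous_on U f" "continuous_on U g"
    using SX_common_domain[OF assms(1,2)] by blast
  obtain t0 where t0: "t0 \<in> U" "0 < f t0"
    using \<open>\<not> sle f (\<lambda>t. 0)\<close> U(1) unfolding sle_def by force
  obtain n :: nat where n: "g t0 < real n" using reals_Archimedean2 by blast
  define N where "N = (U \<inter> f -` {0<..}) \<inter> (U \<inter> g -` {..<real n})"
  have "open N" unfolding N_def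
    using U by (intro open_Int continuous_open_preimage) (auto simp: dense_open_def)
  moreover have "t0 \<in> N" using t0 n by (simp add: N_def)
  ultimately obtain t where "t \<in> N" "f t \<le> max (g t - real n) 0"
    using eventually_dense_open_filter_in_open assms(3) unfolding sle_iff_eventually by blast
  then show False by (auto simp: N_def)
qed

lemma urysohn_bump:
  fixes t0 :: "'x::t2_space"
  assumes "compact (UNIV::'x set)" "open V" "t0 \<in> V"
  obtains h :: "'x \<Rightarrow> real" where "continuous_on UNIV h" "h t0 = 1"
    "\<forall>t. 0 \<le> h t \<and> h t \<le> 1" "\<forall>t. t \<notin> V \<longrightarrow> h t = 0"
proof -
  have "compact_space (euclidean::'x topology)"
    using assms(1) by (simp add: compact_space_def)
  moreover have "Hausdorff_space (euclidean::'x topology)"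
    unfolding Hausdorff_space_def disjnt_def using hausdorff by auto
  ultimately have "normal_space (euclidean::'x topology)"
    using compact_Hausdorff_or_regular_imp_normal_space by blast
  then obtain f where f: "continuous_map euclidean (top_of_set {0..1::real}) f"
    "f ` (- V) \<subseteq> {0}" "f ` {t0} \<subseteq> {1}"
    by (rule Urysohn_lemma[of _ "- V" "{t0}" 0 1]) (use assms in \<open>auto simp: disjnt_def\<close>)
  then show ?thesis
    by (intro that[of f]) (auto simp: continuous_map_in_subtopology)
qed

section \<open>Order convergence through sets of eventual dominators\<close>

definition eventually_net :: "'i set \<Rightarrow> ('i \<Rightarrow> 'i \<Rightarrow> bool) \<Rightarrow> ('i \<Rightarrow> bool) \<Rightarrow> bool" where
  "eventually_net I r P \<longleftrightarrow> (\<exists>a0\<in>I. \<forall>a\<in>I. r a0 a \<longrightarrow> P a)"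

lemma eventually_net_always:
  assumes "directed_set I r" "\<forall>a. P a" shows "eventually_net I r P"
proof -
  obtain a0 where "a0 \<in> I" using assms(1) unfolding directed_set_def by blast
  then show ?thesis using assms(2) unfolding eventually_net_def by blast
qed

lemma eventually_net_mono: "eventually_net I r P \<Longrightarrow> (\<And>a. P a \<Longrightarrow> Q a) \<Longrightarrow> eventually_net I r Q"
  by (auto simp: eventually_net_def)

lemma eventually_net_conj:
  assumes "directed_set I r" "eventually_net I r P" "eventually_net I r Q"
  shows "eventually_net I r (\<lambda>a. P a \<and> Q a)"
proof -
  obtain a1 a2 where a: "a1 \<in> I" "a2 \<in> I" "\<forall>a\<in>I. r a1 a \<longrightarrow> P a" "\<forall>a\<in>I. r a2 a \<longrightarrow> Q a"
    using assms(2,3) by (auto simp: eventually_net_def)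
  obtain a0 where a0: "a0 \<in> I" "r a1 a0" "r a2 a0"
    using assms(1) a(1,2) unfolding directed_set_def by blast
  have trans: "\<forall>a\<in>I. \<forall>b\<in>I. \<forall>c\<in>I. r a b \<longrightarrow> r b c \<longrightarrow> r a c"
    using assms(1) unfolding directed_set_def by blast
  have "r a1 a \<and> r a2 a" if "a \<in> I" "r a0 a" for a
    using trans a(1,2) a0 that by blast
  then show ?thesis using a(3,4) a0(1) unfolding eventually_net_def by blast
qed

lemma ord_conv_E_zeroI:
  fixes y :: "'i \<Rightarrow> 'e::{ordered_real_vector,lattice}"
  assumes dir: "directed_set I r" and "0 \<le> b" "\<forall>a. vabs (y a) \<le> b"
    and inf_zero: "\<forall>v. (\<forall>z\<ge>0. eventually_net I r (\<lambda>a. vabs (y a) \<le> z) \<longrightarrow> v \<le> z) \<longrightarrow> v \<le> 0"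
  shows "ord_conv_E I r y 0"
proof -
  define D where "D = {z. 0 \<le> z \<and> eventually_net I r (\<lambda>a. vabs (y a) \<le> z)}"
  have "b \<in> D" using assms(2,3) eventually_net_always[OF dir] by (auto simp: D_def)
  have inf_in_D: "inf z1 z2 \<in> D" if "z1 \<in> D" "z2 \<in> D" for z1 z2
    using that eventually_net_conj[OF dir] by (auto simp: D_def)
  show ?thesis unfolding ord_conv_E_def
  proof (intro exI[of _ D] conjI)
    show "D \<noteq> {}" using \<open>b \<in> D\<close> by blast
    show "\<forall>d1\<in>D. \<forall>d2\<in>D. \<exists>d\<in>D. d \<le> d1 \<and> d \<le> d2"
      using inf_in_D by (meson inf_le1 inf_le2)
    show "\<forall>d\<in>D. 0 \<le> d" by (simp add: D_def)
    show "\<forall>w. (\<forall>d\<in>D. w \<le> d) \<longrightarrow> w \<le> 0"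
      unfolding D_def using inf_zero by blast
    show "\<forall>d\<in>D. \<exists>a0\<in>I. \<forall>a\<in>I. r a0 a \<longrightarrow> vabs (y a - 0) \<le> d"
      by (simp add: D_def eventually_net_def)
  qed
qed

lemma ord_conv_S_zeroI:
  fixes y :: "'i \<Rightarrow> 'x::topological_space \<Rightarrow> real"
  assumes dir: "directed_set I r" and "b \<in> SX" "sle (\<lambda>t. 0) b" "\<forall>a. sle (\<lambda>t. \<bar>y a t\<bar>) b"
    and inf_zero: "\<forall>v\<in>SX. (\<forall>z\<in>SX. sle (\<lambda>t. 0) z
        \<longrightarrow> eventually_net I r (\<lambda>a. sle (\<lambda>t. \<bar>y a t\<bar>) z) \<longrightarrow> sle v z) \<longrightarrow> sle v (\<lambda>t. 0)"
  shows "ord_conv_S I r y (\<lambda>t. 0)"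
proof -
  define D where "D = {z \<in> SX. sle (\<lambda>t. 0) z \<and> eventually_net I r (\<lambda>a. sle (\<lambda>t. \<bar>y a t\<bar>) z)}"
  have "b \<in> D" using assms(2-4) eventually_net_always[OF dir] by (auto simp: D_def)
  have min_in_D: "(\<lambda>t. min (z1 t) (z2 t)) \<in> D" if "z1 \<in> D" "z2 \<in> D" for z1 z2
  proof -
    have "eventually_net I r (\<lambda>a. sle (\<lambda>t. \<bar>y a t\<bar>) z1 \<and> sle (\<lambda>t. \<bar>y a t\<bar>) z2)"
      using that eventually_net_conj[OF dir] by (auto simp: D_def)
    then have "eventually_net I r (\<lambda>a. sle (\<lambda>t. \<bar>y a t\<bar>) (\<lambda>t. min (z1 t) (z2 t)))"
      by (rule eventually_net_mono)
        (auto simp: sle_iff_eventually elim: eventually_elim2)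
    moreover have "sle (\<lambda>t. 0) (\<lambda>t. min (z1 t) (z2 t))"
      using that unfolding D_def sle_iff_eventually by (auto elim: eventually_elim2)
    ultimately show ?thesis using that by (auto simp: D_def intro: SX_min)
  qed
  show ?thesis unfolding ord_conv_S_def
  proof (intro exI[of _ D] conjI)
    show "D \<subseteq> SX" "D \<noteq> {}" using \<open>b \<in> D\<close> by (auto simp: D_def)
    show "\<forall>d1\<in>D. \<forall>d2\<in>D. \<exists>d\<in>D. sle d d1 \<and> sle d d2"
    proof (intro ballI)
      fix d1 d2 assume "d1 \<in> D" "d2 \<in> D"
      moreover have "sle (\<lambda>t. min (d1 t) (d2 t)) d1" "sle (\<lambda>t. min (d1 t) (d2 t)) d2"
        by (simp_all add: sle_iff_eventually)
      ultimately show "\<exists>d\<in>D. sle d d1 \<and> sle d d2" using min_in_D by blast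
    qed
    show "\<forall>d\<in>D. sle (\<lambda>t. 0) d" by (simp add: D_def)
    show "\<forall>w\<in>SX. (\<forall>d\<in>D. sle w d) \<longrightarrow> sle w (\<lambda>t. 0)"
      unfolding D_def using inf_zero by blast
    show "\<forall>d\<in>D. \<exists>a0\<in>I. \<forall>a\<in>I. r a0 a \<longrightarrow> sle (\<lambda>t. \<bar>y a t - 0\<bar>) d"
      by (simp add: D_def eventually_net_def)
  qed
qed

section \<open>Lattice homomorphisms into S(X)\<close>

lemma inf_eq_neg_sup_neg: "inf x y = - sup (- x) (- (y::'e::{ordered_real_vector,lattice}))"
proof (rule antisym)
  show "inf x y \<le> - sup (- x) (- y)"
    by (subst le_minus_iff) (auto intro: sup_least simp: neg_le_iff_le)
  show "- sup (- x) (- y) \<le> inf x y"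
    by (intro le_infI) (subst minus_le_iff; simp)+
qed

lemma vabs_nonneg: "0 \<le> vabs (x::'e::{ordered_real_vector,lattice})"
proof -
  have "x \<le> vabs x" "- x \<le> vabs x" by (auto simp: vabs_def)
  then have "0 \<le> vabs x + vabs x" using add_mono by fastforce
  then have "0 \<le> (1/2::real) *\<^sub>R (vabs x + vabs x)" by (intro scaleR_nonneg_nonneg) auto
  then show ?thesis by simp
qed

lemma vabs_of_nonneg: "0 \<le> (x::'e::{ordered_real_vector,lattice}) \<Longrightarrow> vabs x = x"
  unfolding vabs_def by (rule sup_absorb1) (meson neg_le_0_iff_le order_trans)

locale S_embedding =
  fixes T :: "'e::{ordered_real_vector,lattice} \<Rightarrow> 'x::topological_space \<Rightarrow> real"
  assumes hom: "inj_lattice_hom_S T"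
begin

lemma T_in_SX: "T x \<in> SX"
  using hom by (auto simp: inj_lattice_hom_S_def)

lemma T_add: "\<forall>\<^sub>F t in dense_open_filter. T (x + y) t = T x t + T y t"
  using hom by (auto simp: inj_lattice_hom_S_def seq_iff_eventually)

lemma T_scaleR: "\<forall>\<^sub>F t in dense_open_filter. T (c *\<^sub>R x) t = c * T x t"
  using hom by (auto simp: inj_lattice_hom_S_def seq_iff_eventually)

lemma T_sup: "\<forall>\<^sub>F t in dense_open_filter. T (sup x y) t = max (T x t) (T y t)"
  using hom by (auto simp: inj_lattice_hom_S_def seq_iff_eventually)

lemma T_eq_imp_eq: "\<forall>\<^sub>F t in dense_open_filter. T x t = T y t \<Longrightarrow> x = y"
  using hom by (auto simp: inj_lattice_hom_S_def seq_iff_eventually)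

lemma T_zero: "\<forall>\<^sub>F t in dense_open_filter. T 0 t = 0"
  using T_add[of 0 0] by eventually_elim auto

lemma T_uminus: "\<forall>\<^sub>F t in dense_open_filter. T (- x) t = - T x t"
  using T_scaleR[of "-1" x] by eventually_elim auto

lemma T_diff: "\<forall>\<^sub>F t in dense_open_filter. T (x - y) t = T x t - T y t"
  using T_add[of x "- y"] T_uminus[of y] by eventually_elim auto

lemma T_inf: "\<forall>\<^sub>F t in dense_open_filter. T (inf x y) t = min (T x t) (T y t)"
  using T_uminus[of "sup (- x) (- y)"] T_sup[of "- x" "- y"] T_uminus[of x] T_uminus[of y]
  by eventually_elim (auto simp: inf_eq_neg_sup_neg[of x y])

lemma T_vabs: "\<forall>\<^sub>F t in dense_open_filter. T (vabs x) t = \<bar>T x t\<bar>"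
  using T_sup[of x "- x"] T_uminus[of x] by eventually_elim (auto simp: vabs_def)

lemma T_inf_vabs_diff:
  "\<forall>\<^sub>F t in dense_open_filter. T (inf (vabs (x - l)) e) t = min \<bar>T x t - T l t\<bar> (T e t)"
  using T_inf[of "vabs (x - l)" e] T_vabs[of "x - l"] T_diff[of x l] by eventually_elim simp

lemma T_mono: "x \<le> y \<Longrightarrow> \<forall>\<^sub>F t in dense_open_filter. T x t \<le> T y t"
  using T_sup[of x y] by eventually_elim (auto simp: sup_absorb2)

lemma T_le_imp_le: "\<forall>\<^sub>F t in dense_open_filter. T x t \<le> T y t \<Longrightarrow> x \<le> y"
proof -
  assume "\<forall>\<^sub>F t in dense_open_filter. T x t \<le> T y t"
  with T_sup[of x y] have "\<forall>\<^sub>F t in dense_open_filter. T (sup x y) t = T y t"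
    by eventually_elim auto
  then have "sup x y = y" by (rule T_eq_imp_eq)
  then show "x \<le> y" using sup_ge1[of x y] by simp
qed

lemma T_nonneg:
  assumes "0 \<le> x" shows "\<forall>\<^sub>F t in dense_open_filter. 0 \<le> T x t"
  using T_mono[OF assms] T_zero by eventually_elim auto

end

section \<open>Order density of the representation\<close>

locale S_representation = S_embedding T for T :: "'e::{ordered_real_vector,lattice} \<Rightarrow> 'x::t2_space \<Rightarrow> real" +
  fixes u :: 'e
  assumes archimedean: "archimedean_vl TYPE('e)"
    and unit_nonneg: "0 \<le> u"
    and compact_UNIV: "compact (UNIV::'x set)"
    and T_unit: "seq (T u) (\<lambda>t. 1)"
    and dense_ideal: "\<forall>f. f \<in> sup_closure (T ` principal_ideal u) \<longleftrightarrow> (\<exists>h. continuous_on UNIV h \<and> seq f h)"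
begin

lemma T_scaleR_unit: "\<forall>\<^sub>F t in dense_open_filter. T (c *\<^sub>R u) t = c"
  using T_scaleR[of c u] T_unit unfolding seq_iff_eventually by eventually_elim auto

lemma continuous_approx_by_T:
  assumes "continuous_on UNIV h" "0 < \<epsilon>"
  obtains e where "\<forall>\<^sub>F t in dense_open_filter. \<bar>h t - T e t\<bar> \<le> \<epsilon>"
proof -
  have "seq h h" by (simp add: seq_iff_eventually)
  then have "h \<in> sup_closure (T ` principal_ideal u)"
    using dense_ideal assms(1) by blast
  then obtain g U where "g \<in> T ` principal_ideal u" "dense_open U" "\<forall>t\<in>U. \<bar>h t - g t\<bar> \<le> \<epsilon>"
    using assms(2) unfolding sup_closure_def by blast
  then show ?thesis
    using that by (auto simp: eventually_dense_open_filter)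
qed

lemma continuous_approx_below_by_T:
  assumes "continuous_on UNIV g" "0 < \<epsilon>"
  obtains e where "0 \<le> e" "\<forall>\<^sub>F t in dense_open_filter. T e t \<le> max (g t) 0"
    "\<forall>\<^sub>F t in dense_open_filter. g t - 2 * \<epsilon> \<le> T e t"
proof -
  obtain e0 where e0: "\<forall>\<^sub>F t in dense_open_filter. \<bar>g t - T e0 t\<bar> \<le> \<epsilon>"
    using continuous_approx_by_T[OF assms] by blast
  define e where "e = sup (e0 - \<epsilon> *\<^sub>R u) 0"
  have "\<forall>\<^sub>F t in dense_open_filter. T e t = max (T e0 t - \<epsilon>) 0"
    using T_sup[of "e0 - \<epsilon> *\<^sub>R u" 0] T_diff[of e0 "\<epsilon> *\<^sub>R u"] T_scaleR_unit[of \<epsilon>] T_zero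
    unfolding e_def by eventually_elim auto
  with e0 have bounds: "\<forall>\<^sub>F t in dense_open_filter. T e t \<le> max (g t) 0 \<and> g t - 2 * \<epsilon> \<le> T e t"
  proof eventually_elim
    case (elim t)
    then show ?case using abs_le_D1[OF elim(1)] abs_le_D2[OF elim(1)] by (auto simp: max_def)
  qed
  show ?thesis
  proof (rule that)
    show "0 \<le> e" by (simp add: e_def)
    show "\<forall>\<^sub>F t in dense_open_filter. T e t \<le> max (g t) 0"
      "\<forall>\<^sub>F t in dense_open_filter. g t - 2 * \<epsilon> \<le> T e t"
      using bounds by (auto elim: eventually_mono)
  qed
qed

lemma order_dense:
  assumes "f \<in> SX" "\<not> sle f (\<lambda>t. 0)"
  obtains e where "0 \<le> e" "e \<noteq> 0" "sle (T e) (\<lambda>t. max (f t) 0)"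
proof -
  obtain V \<epsilon> where V: "open V" "V \<noteq> {}" "0 < \<epsilon>" "\<forall>t\<in>V. \<epsilon> \<le> f t"
    using SX_positive_on_open[OF assms] by blast
  then obtain t0 where "t0 \<in> V" by blast
  obtain h :: "'x \<Rightarrow> real" where h: "continuous_on UNIV h" "h t0 = 1"
    "\<forall>t. 0 \<le> h t \<and> h t \<le> 1" "\<forall>t. t \<notin> V \<longrightarrow> h t = 0"
    using urysohn_bump[OF compact_UNIV V(1) \<open>t0 \<in> V\<close>] by blast
  have "continuous_on UNIV (\<lambda>t. \<epsilon> * h t)" using h(1) by (intro continuous_intros)
  moreover have "0 < \<epsilon> / 4" using V(3) by simp
  ultimately obtain e where e: "0 \<le> e" "\<forall>\<^sub>F t in dense_open_filter. T e t \<le> max (\<epsilon> * h t) 0"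
    "\<forall>\<^sub>F t in dense_open_filter. \<epsilon> * h t - 2 * (\<epsilon> / 4) \<le> T e t"
    by (rule continuous_approx_below_by_T)
  have bump_le: "max (\<epsilon> * h t) 0 \<le> max (f t) 0" for t
  proof (cases "t \<in> V")
    case True
    have "\<epsilon> * h t \<le> \<epsilon>" using V(3) h(3) by (simp add: mult_left_le)
    moreover have "\<epsilon> \<le> f t" using V(4) True by blast
    ultimately have "\<epsilon> * h t \<le> f t" by linarith
    then show ?thesis by (rule max.mono) simp
  qed (simp add: h(4))
  show ?thesis
  proof
    show "0 \<le> e" by fact
    show "sle (T e) (\<lambda>t. max (f t) 0)"
      using e(2) bump_le order_trans unfolding sle_iff_eventually by (blast intro: eventually_mono)
    show "e \<noteq> 0"
    proof
      assume "e = 0"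
      have "\<forall>\<^sub>F t in dense_open_filter. \<epsilon> * h t \<le> \<epsilon> / 2"
        using e(3) T_zero unfolding \<open>e = 0\<close> by eventually_elim simp
      moreover have "open {t. 1/2 < h t}"
        using h(1) by (intro open_Collect_less continuous_intros) auto
      moreover have "t0 \<in> {t. 1/2 < h t}" using h(2) by simp
      ultimately obtain t where "1/2 < h t" "\<epsilon> * h t \<le> \<epsilon> / 2"
        using eventually_dense_open_filter_in_open by blast
      then show False using mult_strict_left_mono[of "1/2" "h t" \<epsilon>] V(3) by simp
    qed
  qed
qed

lemma T_preserves_inf_zero:
  assumes "\<forall>d\<in>D. 0 \<le> d" "\<forall>v. (\<forall>d\<in>D. v \<le> d) \<longrightarrow> v \<le> 0"
    and "w \<in> SX" "\<forall>d\<in>D. sle w (T d)"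
  shows "sle w (\<lambda>t. 0)"
proof (rule ccontr)
  assume "\<not> sle w (\<lambda>t. 0)"
  then obtain e where e: "0 \<le> e" "e \<noteq> 0" "sle (T e) (\<lambda>t. max (w t) 0)"
    using order_dense[OF assms(3)] by blast
  have "e \<le> d" if "d \<in> D" for d
  proof (rule T_le_imp_le)
    have "\<forall>\<^sub>F t in dense_open_filter. T e t \<le> max (w t) 0"
      "\<forall>\<^sub>F t in dense_open_filter. w t \<le> T d t"
      using e(3) assms(4) that by (auto simp: sle_iff_eventually)
    moreover have "\<forall>\<^sub>F t in dense_open_filter. 0 \<le> T d t"
      using T_nonneg assms(1) that by blast
    ultimately show "\<forall>\<^sub>F t in dense_open_filter. T e t \<le> T d t"
      by eventually_elim auto
  qed
  then have "e \<le> 0" using assms(2) by blast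
  with e(1,2) show False by simp
qed

lemma order_continuous:
  assumes "ord_conv_E I r x 0"
  shows "ord_conv_S I r (\<lambda>a. T (x a)) (\<lambda>t. 0)"
proof -
  obtain D where D: "D \<noteq> {}" "\<forall>d1\<in>D. \<forall>d2\<in>D. \<exists>d\<in>D. d \<le> d1 \<and> d \<le> d2" "\<forall>d\<in>D. 0 \<le> d"
    "\<forall>v. (\<forall>d\<in>D. v \<le> d) \<longrightarrow> v \<le> 0" "\<forall>d\<in>D. \<exists>a0\<in>I. \<forall>a\<in>I. r a0 a \<longrightarrow> vabs (x a - 0) \<le> d"
    using assms unfolding ord_conv_E_def by blast
  have dominated: "sle (\<lambda>t. \<bar>T (x a) t - 0\<bar>) (T e)" if "vabs (x a - 0) \<le> e" for a e
    using T_vabs[of "x a"] T_mono[OF that] unfolding sle_iff_eventually by eventually_elim simp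
  show ?thesis unfolding ord_conv_S_def
  proof (intro exI[of _ "T ` D"] conjI)
    show "T ` D \<subseteq> SX" "T ` D \<noteq> {}" using T_in_SX D(1) by auto
    show "\<forall>d1\<in>T ` D. \<forall>d2\<in>T ` D. \<exists>d\<in>T ` D. sle d d1 \<and> sle d d2"
    proof (intro ballI)
      fix d1 d2 assume "d1 \<in> T ` D" "d2 \<in> T ` D"
      then obtain e1 e2 where "e1 \<in> D" "e2 \<in> D" and d: "d1 = T e1" "d2 = T e2" by blast
      then obtain e where "e \<in> D" "e \<le> e1" "e \<le> e2" using D(2) by blast
      then have "sle (T e) d1" "sle (T e) d2" unfolding d sle_iff_eventually by (simp_all add: T_mono)
      with \<open>e \<in> D\<close> show "\<exists>d\<in>T ` D. sle d d1 \<and> sle d d2" by blast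
    qed
    show "\<forall>d\<in>T ` D. sle (\<lambda>t. 0) d"
      using D(3) T_nonneg unfolding sle_iff_eventually by blast
    show "\<forall>w\<in>SX. (\<forall>d\<in>T ` D. sle w d) \<longrightarrow> sle w (\<lambda>t. 0)"
      using T_preserves_inf_zero[OF D(3,4)] by blast
    show "\<forall>d\<in>T ` D. \<exists>a0\<in>I. \<forall>a\<in>I. r a0 a \<longrightarrow> sle (\<lambda>t. \<bar>T (x a) t - 0\<bar>) d"
      using D(5) dominated by blast
  qed
qed

lemma sle_excess_if_below_dominators:
  assumes "0 \<le> c" and uo: "ord_conv_E I r (\<lambda>a. inf (vabs (x a - l)) (c *\<^sub>R u)) 0"
    and v: "v \<in> SX" and w: "w \<in> SX" "sle (\<lambda>t. 0) w"
    and below: "\<forall>z\<in>SX. sle (\<lambda>t. 0) z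
      \<longrightarrow> eventually_net I r (\<lambda>a. sle (\<lambda>t. \<bar>min \<bar>T (x a) t - T l t\<bar> (w t)\<bar>) z) \<longrightarrow> sle v z"
  shows "sle v (\<lambda>t. max (w t - c) 0)"
proof -
  define excess where "excess = (\<lambda>t. max (w t - c) 0)"
  obtain D where D: "\<forall>d\<in>D. 0 \<le> d" "\<forall>v. (\<forall>d\<in>D. v \<le> d) \<longrightarrow> v \<le> 0"
    "\<forall>d\<in>D. eventually_net I r (\<lambda>a. vabs (inf (vabs (x a - l)) (c *\<^sub>R u) - 0) \<le> d)"
    using uo unfolding ord_conv_E_def eventually_net_def by blast
  have "sle (\<lambda>t. v t - excess t) (T d)" if "d \<in> D" for d
  proof -
    define z where "z = (\<lambda>t. T d t + excess t)"
    have "eventually_net I r (\<lambda>a. sle (\<lambda>t. \<bar>min \<bar>T (x a) t - T l t\<bar> (w t)\<bar>) z)"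
    proof (rule eventually_net_mono[OF D(3)[rule_format, OF that]])
      fix a assume "vabs (inf (vabs (x a - l)) (c *\<^sub>R u) - 0) \<le> d"
      then have "vabs (inf (vabs (x a - l)) (c *\<^sub>R u)) \<le> d" by simp
      from T_mono[OF this] T_vabs[of "inf (vabs (x a - l)) (c *\<^sub>R u)"]
        T_inf_vabs_diff[of "x a" l "c *\<^sub>R u"] T_scaleR_unit[of c] w(2)
      show "sle (\<lambda>t. \<bar>min \<bar>T (x a) t - T l t\<bar> (w t)\<bar>) z"
        unfolding sle_iff_eventually z_def excess_def
      proof eventually_elim
        case (elim t)
        let ?D = "\<bar>T (x a) t - T l t\<bar>"
        have "min ?D (w t) \<le> min ?D c + max (w t - c) 0"
          by (auto simp: min_def max_def)
        with elim \<open>0 \<le> c\<close> show ?case by simp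
      qed
    qed
    moreover have "z \<in> SX" unfolding z_def excess_def
      by (intro SX_add SX_max SX_diff T_in_SX w(1) SX_const)
    moreover have "sle (\<lambda>t. 0) z"
      using T_nonneg[of d] D(1) that unfolding sle_iff_eventually z_def excess_def
      by (auto elim: eventually_mono)
    ultimately have "sle v z" using below by blast
    then show ?thesis unfolding sle_iff_eventually z_def by eventually_elim simp
  qed
  moreover have "(\<lambda>t. v t - excess t) \<in> SX" unfolding excess_def
    by (intro SX_diff SX_max v w(1) SX_const)
  ultimately have "sle (\<lambda>t. v t - excess t) (\<lambda>t. 0)"
    using T_preserves_inf_zero[OF D(1,2)] by blast
  then show ?thesis unfolding sle_iff_eventually excess_def by eventually_elim simp
qed

lemma uo_continuous:
  assumes dir: "directed_set I r" and uo: "uo_conv_E I r x l"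
  shows "uo_conv_S I r (\<lambda>a. T (x a)) (T l)"
  unfolding uo_conv_S_def
proof (intro ballI impI)
  fix w :: "'x \<Rightarrow> real" assume w: "w \<in> SX" "sle (\<lambda>t. 0) w"
  show "ord_conv_S I r (\<lambda>a t. min \<bar>T (x a) t - T l t\<bar> (w t)) (\<lambda>t. 0)"
  proof (rule ord_conv_S_zeroI[OF dir w])
    show "\<forall>a. sle (\<lambda>t. \<bar>min \<bar>T (x a) t - T l t\<bar> (w t)\<bar>) w"
      using w(2) by (auto simp: sle_iff_eventually elim: eventually_mono)
    show "\<forall>v\<in>SX. (\<forall>z\<in>SX. sle (\<lambda>t. 0) z
        \<longrightarrow> eventually_net I r (\<lambda>a. sle (\<lambda>t. \<bar>min \<bar>T (x a) t - T l t\<bar> (w t)\<bar>) z) \<longrightarrow> sle v z)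
      \<longrightarrow> sle v (\<lambda>t. 0)"
    proof (intro ballI impI)
      fix v assume v: "v \<in> SX" and below: "\<forall>z\<in>SX. sle (\<lambda>t. 0) z
        \<longrightarrow> eventually_net I r (\<lambda>a. sle (\<lambda>t. \<bar>min \<bar>T (x a) t - T l t\<bar> (w t)\<bar>) z) \<longrightarrow> sle v z"
      have "sle v (\<lambda>t. max (w t - real n) 0)" for n :: nat
      proof (rule sle_excess_if_below_dominators[OF _ _ v w below])
        show "ord_conv_E I r (\<lambda>a. inf (vabs (x a - l)) (real n *\<^sub>R u)) 0"
          using uo unit_nonneg unfolding uo_conv_E_def by (simp add: scaleR_nonneg_nonneg)
      qed simp
      then show "sle v (\<lambda>t. 0)" by (intro SX_sle_zero_if_sle_excesses[OF v w(1)]) blast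
    qed
  qed
qed

lemma multiples_le_if_below_dominators:
  assumes "0 \<le> e" "0 \<le> v" "sle (\<lambda>t. 0) \<delta>"
    and e2: "0 \<le> e2" "sle (T e2) (\<lambda>t. max (T v t - \<delta> t) 0)"
    and below: "\<forall>z\<ge>0. sle (\<lambda>t. min (\<delta> t) (T e t)) (T z) \<longrightarrow> v \<le> z"
  shows "c *\<^sub>R e2 \<le> e"
proof -
  define z where "z = v - e2 + sup (e - c *\<^sub>R e2) 0"
  have Tz: "\<forall>\<^sub>F t in dense_open_filter. T z t = T v t - T e2 t + max (T e t - c * T e2 t) 0"
    using T_add[of "v - e2" "sup (e - c *\<^sub>R e2) 0"] T_diff[of v e2] T_sup[of "e - c *\<^sub>R e2" 0]
      T_zero T_diff[of e "c *\<^sub>R e2"] T_scaleR[of c e2]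
    unfolding z_def by eventually_elim auto
  have facts: "\<forall>\<^sub>F t in dense_open_filter. T e2 t \<le> max (T v t - \<delta> t) 0 \<and> 0 \<le> T e2 t
      \<and> 0 \<le> T v t \<and> 0 \<le> \<delta> t \<and> 0 \<le> T e t"
    using e2(2) T_nonneg[OF e2(1)] T_nonneg[OF assms(2)] assms(3) T_nonneg[OF assms(1)]
    unfolding sle_iff_eventually by eventually_elim blast
  have "\<forall>\<^sub>F t in dense_open_filter. T 0 t \<le> T z t \<and> min (\<delta> t) (T e t) \<le> T z t"
    using Tz facts T_zero
  proof eventually_elim
    case (elim t)
    have "0 \<le> max (T e t - c * T e2 t) 0" by simp
    show ?case
    proof (cases "T e2 t \<le> T v t - \<delta> t")
      case True
      then show ?thesis using elim \<open>0 \<le> max _ 0\<close> by (auto simp: min_def)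
    next
      case False
      then have "T e2 t = 0" using elim by (auto simp: max_def split: if_splits)
      then show ?thesis using elim by (auto simp: min_def)
    qed
  qed
  then have "0 \<le> z" "sle (\<lambda>t. min (\<delta> t) (T e t)) (T z)"
    unfolding sle_iff_eventually by (auto intro: T_le_imp_le elim: eventually_mono)
  then have "\<forall>\<^sub>F t in dense_open_filter. T v t \<le> T z t" using below T_mono by blast
  with Tz facts T_scaleR[of c e2]
  have "\<forall>\<^sub>F t in dense_open_filter. T (c *\<^sub>R e2) t \<le> T e t"
  proof eventually_elim
    case (elim t)
    then have "T e2 t \<le> max (T e t - c * T e2 t) 0" by linarith
    show ?case
    proof (cases "0 \<le> T e t - c * T e2 t")
      case False
      then have "T e2 t = 0" using \<open>T e2 t \<le> max _ 0\<close> elim by (auto simp: max_def)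
      then show ?thesis using False elim by simp
    qed (use elim in simp)
  qed
  then show ?thesis by (rule T_le_imp_le)
qed

lemma T_sle_if_below_dominators:
  assumes "0 \<le> e" "0 \<le> v" "\<delta> \<in> SX" "sle (\<lambda>t. 0) \<delta>"
    and below: "\<forall>z\<ge>0. sle (\<lambda>t. min (\<delta> t) (T e t)) (T z) \<longrightarrow> v \<le> z"
  shows "sle (T v) \<delta>"
proof (rule ccontr)
  assume "\<not> sle (T v) \<delta>"
  then have "\<not> sle (\<lambda>t. T v t - \<delta> t) (\<lambda>t. 0)"
    unfolding sle_iff_eventually by (auto elim: eventually_mono)
  then obtain e2 where e2: "0 \<le> e2" "e2 \<noteq> 0" "sle (T e2) (\<lambda>t. max (T v t - \<delta> t) 0)"
    using order_dense SX_diff[OF T_in_SX assms(3)] by blast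
  have "real n *\<^sub>R e2 \<le> e" for n :: nat
    using multiples_le_if_below_dominators[OF assms(1,2,4) e2(1,3) below] .
  then have "e2 \<le> 0" using archimedean unfolding archimedean_vl_def by blast
  with e2(1,2) show False by simp
qed

lemma eventually_le_if_T_dominates:
  assumes "eventually_net I r (\<lambda>a. sle (\<lambda>t. \<bar>min \<bar>T (x a) t - T l t\<bar> (T e t) - 0\<bar>) \<delta>)"
    and "sle (\<lambda>t. min (\<delta> t) (T e t)) (T z)"
  shows "eventually_net I r (\<lambda>a. inf (vabs (x a - l)) e \<le> z)"
proof (rule eventually_net_mono[OF assms(1)])
  fix a assume "sle (\<lambda>t. \<bar>min \<bar>T (x a) t - T l t\<bar> (T e t) - 0\<bar>) \<delta>"
  with assms(2) T_inf_vabs_diff[of "x a" l e]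
  have "\<forall>\<^sub>F t in dense_open_filter. T (inf (vabs (x a - l)) e) t \<le> T z t"
    unfolding sle_iff_eventually
  proof eventually_elim
    case (elim t)
    let ?m = "min \<bar>T (x a) t - T l t\<bar> (T e t)"
    have "?m \<le> \<delta> t" using elim(3) by (auto simp: abs_le_iff)
    then have "?m \<le> min (\<delta> t) (T e t)" by simp
    with elim(1,2) show ?case by linarith
  qed
  then show "inf (vabs (x a - l)) e \<le> z" by (rule T_le_imp_le)
qed

lemma uo_continuous_inverse:
  assumes dir: "directed_set I r" and uo: "uo_conv_S I r (\<lambda>a. T (x a)) (T l)"
  shows "uo_conv_E I r x l"
  unfolding uo_conv_E_def
proof (intro allI impI)
  fix e :: 'e assume e: "0 \<le> e"
  have vabs_trunc: "vabs (inf (vabs (x a - l)) e) = inf (vabs (x a - l)) e" for a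
    by (intro vabs_of_nonneg) (simp add: vabs_nonneg e)
  show "ord_conv_E I r (\<lambda>a. inf (vabs (x a - l)) e) 0"
  proof (rule ord_conv_E_zeroI[OF dir e])
    show "\<forall>a. vabs (inf (vabs (x a - l)) e) \<le> e" by (simp add: vabs_trunc)
    show "\<forall>v. (\<forall>z\<ge>0. eventually_net I r (\<lambda>a. vabs (inf (vabs (x a - l)) e) \<le> z) \<longrightarrow> v \<le> z)
      \<longrightarrow> v \<le> 0"
    proof (intro allI impI)
      fix v
      assume below: "\<forall>z\<ge>0. eventually_net I r (\<lambda>a. vabs (inf (vabs (x a - l)) e) \<le> z) \<longrightarrow> v \<le> z"
      have "sle (\<lambda>t. 0) (T e)" using T_nonneg[OF e] by (simp add: sle_iff_eventually)
      then have "ord_conv_S I r (\<lambda>a t. min \<bar>T (x a) t - T l t\<bar> (T e t)) (\<lambda>t. 0)"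
        using uo T_in_SX unfolding uo_conv_S_def by blast
      then obtain DS where DS: "DS \<subseteq> SX" "\<forall>d\<in>DS. sle (\<lambda>t. 0) d"
        "\<forall>w\<in>SX. (\<forall>d\<in>DS. sle w d) \<longrightarrow> sle w (\<lambda>t. 0)"
        "\<forall>d\<in>DS. eventually_net I r (\<lambda>a. sle (\<lambda>t. \<bar>min \<bar>T (x a) t - T l t\<bar> (T e t) - 0\<bar>) d)"
        unfolding ord_conv_S_def eventually_net_def by blast
      have "sle (T (sup v 0)) \<delta>" if "\<delta> \<in> DS" for \<delta>
      proof (rule T_sle_if_below_dominators[OF e _ _ DS(2)[rule_format, OF that]])
        show "\<forall>z\<ge>0. sle (\<lambda>t. min (\<delta> t) (T e t)) (T z) \<longrightarrow> sup v 0 \<le> z"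
          using below eventually_le_if_T_dominates[OF DS(4)[rule_format, OF that]]
          by (simp add: vabs_trunc)
      qed (use DS(1) that in auto)
      then have "sle (T (sup v 0)) (\<lambda>t. 0)" using DS(3) T_in_SX by blast
      with T_zero have "\<forall>\<^sub>F t in dense_open_filter. T (sup v 0) t \<le> T 0 t"
        unfolding sle_iff_eventually by eventually_elim simp
      then have "sup v 0 \<le> 0" by (rule T_le_imp_le)
      then show "v \<le> 0" by simp
    qed
  qed
qed

end

theorem lemma3p2:
  fixes u :: "'e::{ordered_real_vector,lattice}"
    and T :: "'e \<Rightarrow> 'x::t2_space \<Rightarrow> real"
  assumes arch: "archimedean_vl TYPE('e)"
    and wu: "weak_unit u"
    and cpt: "compact (UNIV :: 'x set)"
    and hom: "inj_lattice_hom_S T"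
    and unit: "seq (T u) (\<lambda>t. 1)"
    and dens: "\<forall>f. f \<in> sup_closure (T ` principal_ideal u)
                   \<longleftrightarrow> (\<exists>h. continuous_on UNIV h \<and> seq f h)"
  shows "(\<forall>(I::'i set) r x. directed_set I r \<longrightarrow> ord_conv_E I r x 0
            \<longrightarrow> ord_conv_S I r (\<lambda>a. T (x a)) (\<lambda>t. 0))
       \<and> (\<forall>(I::'i set) r x l. directed_set I r \<longrightarrow> uo_conv_E I r x l
            \<longrightarrow> uo_conv_S I r (\<lambda>a. T (x a)) (T l))
       \<and> (\<forall>(I::'i set) r x l. directed_set I r \<longrightarrow> uo_conv_S I r (\<lambda>a. T (x a)) (T l)
            \<longrightarrow> uo_conv_E I r x l)"
proof -
  interpret S_representation T u
    by unfold_locales (use arch wu cpt hom unit dens in \<open>auto simp: weak_unit_def\<close>)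
  show ?thesis using order_continuous uo_continuous uo_continuous_inverse by blast
qed

end
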